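(* For $i,k\in\{1,2,3\}$ with $i\neq k$ and $l\in\{1,2\}$ let $h_{i,k}^{(l)}\in\mathbb{C}\setminus\{0\}$ and let $\mathbf{H}_{i,k}=\mathrm{diag}\big(h_{i,k}^{(1)},h_{i,k}^{(2)}\big)$. Suppose $$\frac{h_{1,2}^{(2)}}{h_{1,2}^{(1)}}\frac{h_{1,3}^{(1)}}{h_{1,3}^{(2)}}\frac{h_{2,3}^{(2)}}{h_{2,3}^{(1)}}\frac{h_{2,1}^{(1)}}{h_{2,1}^{(2)}}\frac{h_{3,1}^{(2)}}{h_{3,1}^{(1)}}\frac{h_{3,2}^{(1)}}{h_{3,2}^{(2)}}=1.$$ Then interference alignment is feasible: there exist vectors $\mathbf{u}_1,\mathbf{u}_2,\mathbf{u}_3,\mathbf{v}_1,\mathbf{v}_2,\mathbf{v}_3\in\mathbb{C}^2$, all of whose entries are nonzero, such that $\mathbf{u}_i^{\dagger}\mathbf{H}_{i,k}\mathbf{v}_k=0$ for all $i\neq k$ in $\{1,2,3\}$.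
   Context: Setting: three transmitter–receiver pairs, each node with a single antenna, all using the same two orthogonal subcarriers, each transmitter sending one stream (three streams over two subcarriers in total). $h_{i,k}^{(l)}$ is the channel coefficient on subcarrier $l$ from transmitter $k$ to receiver $i$ (cross channels for $i\ne k$), $\mathbf{v}_k$ is the precoding vector of transmitter $k$, $\mathbf{u}_i$ the receive filter of receiver $i$, and $\mathbf{u}^\dagger$ denotes conjugate transpose. Interference alignment means the interference from every other transmitter is nulled by each receive filter, i.e. $\mathbf{u}_i^{\dagger}\mathbf{H}_{i,k}\mathbf{v}_k=0$ for $i\neq k$. *)

theory Defs
  imports "HOL-Analysis.Analysis"
begin

text \<open>Channels: h i k l is the coefficient on subcarrier l (l in {1,2}) from transmitter k
to receiver i. Vectors in C^2 are represented as functions nat => complex, entries indexed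
by l in {1,2}.\<close>

definition chanmat :: "(nat \<Rightarrow> nat \<Rightarrow> nat \<Rightarrow> complex) \<Rightarrow> nat \<Rightarrow> nat \<Rightarrow> nat \<Rightarrow> nat \<Rightarrow> complex" where
  "chanmat h i k a b = (if a = b then h i k a else 0)"

definition sesq :: "(nat \<Rightarrow> complex) \<Rightarrow> (nat \<Rightarrow> nat \<Rightarrow> complex) \<Rightarrow> (nat \<Rightarrow> complex) \<Rightarrow> complex" where
  "sesq u M v = (\<Sum>a\<in>{1,2}. \<Sum>b\<in>{1,2}. cnj (u a) * M a b * v b)"

end

theory Submission
  imports Defs
begin

text \<open>Normalise \<open>u\<^sub>i = (1, conj a\<^sub>i)\<close> and \<open>v\<^sub>k = (1, b\<^sub>k)\<close>. Then the alignment condition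
  \<open>u\<^sub>i\<^sup>\<dagger> H\<^sub>i\<^sub>k v\<^sub>k = 0\<close> reads \<open>a\<^sub>i b\<^sub>k = r\<^sub>i\<^sub>k\<close> with \<open>r\<^sub>i\<^sub>k = -h\<^sub>i\<^sub>k\<^sup>(\<^sup>1\<^sup>) / h\<^sub>i\<^sub>k\<^sup>(\<^sup>2\<^sup>)\<close>, i.e. the six
  off-diagonal entries of the rank-one matrix \<open>(a\<^sub>i b\<^sub>k)\<close> are prescribed. This is possible
  exactly when the two 3-cycles of off-diagonal entries have equal products, and the hypothesis
  is precisely that cycle condition.\<close>

lemma sesq_chanmat_normalized:
  "sesq (\<lambda>l. if l = 1 then 1 else cnj a) (chanmat h i k) (\<lambda>l. if l = 1 then 1 else b)
     = h i k 1 + a * b * h i k 2"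
  by (simp add: sesq_def chanmat_def)

lemma off_diagonal_rank_one_factorization:
  fixes r :: "nat \<Rightarrow> nat \<Rightarrow> 'a::field"
  assumes nz: "\<And>i k. i \<in> {1,2,3} \<Longrightarrow> k \<in> {1,2,3} \<Longrightarrow> i \<noteq> k \<Longrightarrow> r i k \<noteq> 0"
    and cycle: "r 1 2 * r 2 3 * r 3 1 = r 1 3 * r 3 2 * r 2 1"
  shows "\<exists>a b. (\<forall>i\<in>{1,2,3}. a i \<noteq> 0 \<and> b i \<noteq> 0) \<and>
           (\<forall>i\<in>{1,2,3}. \<forall>k\<in>{1,2,3}. i \<noteq> k \<longrightarrow> a i * b k = r i k)"
proof -
  have rn: "r 1 2 \<noteq> 0" "r 1 3 \<noteq> 0" "r 2 1 \<noteq> 0" "r 2 3 \<noteq> 0" "r 3 1 \<noteq> 0" "r 3 2 \<noteq> 0"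
    by (simp_all add: nz)
  text \<open>Fix \<open>b\<^sub>1 = 1\<close>; then \<open>a\<^sub>2, a\<^sub>3\<close> are forced, then \<open>b\<^sub>2, b\<^sub>3\<close>, then \<open>a\<^sub>1\<close> from \<open>r\<^sub>1\<^sub>2\<close>;
    the remaining equation \<open>a\<^sub>1 b\<^sub>3 = r\<^sub>1\<^sub>3\<close> is the cycle condition.\<close>
  define a where "a i = (if i = 1 then r 1 2 * r 3 1 / r 3 2 else if i = 2 then r 2 1 else r 3 1)"
    for i :: nat
  define b where "b k = (if k = 1 then 1 else if k = 2 then r 3 2 / r 3 1 else r 2 3 / r 2 1)"
    for k :: nat
  have "a 1 * b 3 = r 1 2 * r 2 3 * r 3 1 / (r 3 2 * r 2 1)"
    by (simp add: a_def b_def)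
  also have "\<dots> = r 1 3"
    using cycle rn by (simp add: field_simps)
  finally have "a 1 * b 3 = r 1 3" .
  moreover have "a 1 * b 2 = r 1 2" "a 2 * b 1 = r 2 1" "a 2 * b 3 = r 2 3"
    "a 3 * b 1 = r 3 1" "a 3 * b 2 = r 3 2"
    using rn by (simp_all add: a_def b_def)
  moreover have "a i \<noteq> 0" "b i \<noteq> 0" for i
    using rn by (simp_all add: a_def b_def)
  ultimately show ?thesis
    by (intro exI[of _ a] exI[of _ b]) auto
qed

theorem theorem1:
  fixes h :: "nat \<Rightarrow> nat \<Rightarrow> nat \<Rightarrow> complex"
  assumes nz: "\<And>i k l. i \<in> {1,2,3} \<Longrightarrow> k \<in> {1,2,3} \<Longrightarrow> i \<noteq> k \<Longrightarrow> l \<in> {1,2} \<Longrightarrow> h i k l \<noteq> 0"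
    and cond: "(h 1 2 2 / h 1 2 1) * (h 1 3 1 / h 1 3 2) * (h 2 3 2 / h 2 3 1)
             * (h 2 1 1 / h 2 1 2) * (h 3 1 2 / h 3 1 1) * (h 3 2 1 / h 3 2 2) = 1"
  shows "\<exists>u v :: nat \<Rightarrow> nat \<Rightarrow> complex.
           (\<forall>i\<in>{1,2,3}. \<forall>l\<in>{1,2}. u i l \<noteq> 0 \<and> v i l \<noteq> 0) \<and>
           (\<forall>i\<in>{1,2,3}. \<forall>k\<in>{1,2,3}. i \<noteq> k \<longrightarrow> sesq (u i) (chanmat h i k) (v k) = 0)"
proof -
  define r where "r i k = - h i k 1 / h i k 2" for i k
  have hn: "h 1 2 1 \<noteq> 0" "h 1 2 2 \<noteq> 0" "h 1 3 1 \<noteq> 0" "h 1 3 2 \<noteq> 0"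
    "h 2 1 1 \<noteq> 0" "h 2 1 2 \<noteq> 0" "h 2 3 1 \<noteq> 0" "h 2 3 2 \<noteq> 0"
    "h 3 1 1 \<noteq> 0" "h 3 1 2 \<noteq> 0" "h 3 2 1 \<noteq> 0" "h 3 2 2 \<noteq> 0"
    by (simp_all add: nz)
  have "r 1 2 * r 2 3 * r 3 1 = r 1 3 * r 3 2 * r 2 1"
    using cond hn unfolding r_def by (simp add: field_simps)
  moreover have "r i k \<noteq> 0" if "i \<in> {1,2,3}" "k \<in> {1,2,3}" "i \<noteq> k" for i k
    using nz[OF that] by (simp add: r_def)
  ultimately obtain a b where ab_nz: "\<forall>i\<in>{1,2,3}. a i \<noteq> 0 \<and> b i \<noteq> 0"
    and ab_eq: "\<forall>i\<in>{1,2,3}. \<forall>k\<in>{1,2,3}. i \<noteq> k \<longrightarrow> a i * b k = r i k"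
    using off_diagonal_rank_one_factorization[of r] by blast
  have "sesq (\<lambda>l. if l = 1 then 1 else cnj (a i)) (chanmat h i k) (\<lambda>l. if l = 1 then 1 else b k) = 0"
    if "i \<in> {1,2,3}" "k \<in> {1,2,3}" "i \<noteq> k" for i k
  proof -
    have "a i * b k = - h i k 1 / h i k 2"
      using ab_eq that unfolding r_def by blast
    then have "a i * b k * h i k 2 = - h i k 1"
      using nz[OF that, of 2] by (simp add: field_simps)
    then show ?thesis
      unfolding sesq_chanmat_normalized by simp
  qed
  with ab_nz show ?thesis
    by (intro exI[of _ "\<lambda>i l. if l = 1 then 1 else cnj (a i)"]
        exI[of _ "\<lambda>k l. if l = 1 then 1 else b k"]) auto
qed

end
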